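(* In the execution model described in the context, let $T(t)$ be the time needed for the system to execute a schedule of $t$ iterations. If every node performs a local computation at each iteration with probability $p_{\rm comp}/n$, with $p_{\rm comp}>p^{\max}_{\rm comm}$, or if $\tau>1$, then there exists a constant $C<24$ such that $$\mathbb{P}\Big(\frac{1}{t}T(t)\le \frac{C}{n}\big(p_{\rm comp}+2\tau p^{\max}_{\rm comm}\big)\Big)\to1\quad\text{as }t\to\infty.$$
   Context: Execution model. There are $n$ nodes connected by an undirected communication graph $G$ with edge set $E^{\rm comm}$; $\mathcal{N}(k)$ denotes the neighbors of $k$ in $G$. A schedule is an i.i.d. sequence of updates: at each iteration, either a communication edge $(k,\ell)\in E^{\rm comm}$ is chosen with probability $p_{k\ell}$, or a node performs a local computation update; $p_{\rm comm}=\sum_{(k,\ell)\in E^{\rm comm}}p_{k\ell}$ and $p_{\rm comp}=1-p_{\rm comm}$ is the total probability of a local update. A local update at a node takes time $1$ and involves only that node; a communication update on $(k,\ell)$ takes time $\tau>0$ and involves both $k$ and $\ell$; each node executes its updates in the order of the schedule. Formally, with $T_i(0)=0$: if iteration $t$ is a communication on $(k,\ell)$ then $T_k(t+1)=T_\ell(t+1)=\max(T_k(t),T_\ell(t))+\tau$; if it is a local update at $k$ then $T_k(t+1)=T_k(t)+1$; all other $T_i$ are unchanged. $T(t)=\max_iT_i(t)$. Finally $p^{\max}_{\rm comm}=\frac{n}{2}\max_k\sum_{\ell\in\mathcal{N}(k)}p_{k\ell}$. *)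

theory Defs
  imports "HOL-Probability.Probability"
begin

text \<open>An update of the schedule: a local computation at a node, or a
communication on an (undirected) edge, the edge being encoded as the pair (k,l) with k < l.\<close>
datatype event = Comp nat | Comm nat nat

fun step :: "real \<Rightarrow> event \<Rightarrow> (nat \<Rightarrow> real) \<Rightarrow> (nat \<Rightarrow> real)" where
  "step \<tau> (Comp k) Tv = Tv(k := Tv k + 1)"
| "step \<tau> (Comm k l) Tv =
     (let m = max (Tv k) (Tv l) + \<tau> in Tv(k := m, l := m))"

definition clocks :: "real \<Rightarrow> event stream \<Rightarrow> nat \<Rightarrow> (nat \<Rightarrow> real)" where
  "clocks \<tau> w t = foldl (\<lambda>Tv e. step \<tau> e Tv) (\<lambda>_. 0) (stake t w)"

definition total_time :: "nat \<Rightarrow> real \<Rightarrow> event stream \<Rightarrow> nat \<Rightarrow> real" where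
  "total_time n \<tau> w t = (MAX i\<in>{..<n}. clocks \<tau> w t i)"

definition edge_prob :: "event pmf \<Rightarrow> (nat \<times> nat) set \<Rightarrow> nat \<Rightarrow> nat \<Rightarrow> real" where
  "edge_prob D E k l =
     (if (k, l) \<in> E then pmf D (Comm k l)
      else if (l, k) \<in> E then pmf D (Comm l k) else 0)"

definition p_comm :: "event pmf \<Rightarrow> (nat \<times> nat) set \<Rightarrow> real" where
  "p_comm D E = (\<Sum>e\<in>E. pmf D (Comm (fst e) (snd e)))"

definition p_comp :: "event pmf \<Rightarrow> (nat \<times> nat) set \<Rightarrow> real" where
  "p_comp D E = 1 - p_comm D E"

definition p_comm_max :: "nat \<Rightarrow> event pmf \<Rightarrow> (nat \<times> nat) set \<Rightarrow> real" where
  "p_comm_max n D E = real n / 2 * (MAX k\<in>{..<n}. \<Sum>l<n. edge_prob D E k l)"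

end

theory Submission
  imports Defs
begin

text \<open>
  The proof uses the exponential potential Phi(T) = sum_i exp(theta T_i), which dominates
  exp(theta T(t)). A local update at k increases Phi by (e^theta - 1) exp(theta T_k); a
  communication on (k, l) increases it by at most (2 e^(theta tau) - 1) (exp(theta T_k) + exp(theta T_l)),
  and node k takes part in a communication with probability at most 2 p^max_comm / n. Hence every
  update multiplies the expected potential by at most
  rho = 1 + (p_comp / n) (e^theta - 1) + (2 e^(theta tau) - 1) 2 p^max_comm / n,
  so E Phi(T(t)) <= n rho^t, and the Chernoff bound gives P(T(t) >= x t) <= n (rho / e^(theta x))^t.
  For x = 23 / n (p_comp + 2 tau p^max_comm) and theta = min 1 (1 / tau) one has rho < e^(theta x):
  if tau > 1 because e^(theta tau) = e, and if tau <= 1 because p_comp > p^max_comm lets the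
  computation term dominate the communication term.
\<close>

instance event :: countable
  by countable_datatype

lemma measurable_stake_measure_pmf:
  "stake t \<in> measurable (stream_space (measure_pmf D)) (count_space (UNIV :: 'a::countable list set))"
  by (subst measurable_cong_sets[OF sets_stream_space_cong[OF sets_measure_pmf_count_space] refl])
     (rule measurable_stake)

lemma borel_measurable_stake_measure_pmf:
  fixes D :: "'a::countable pmf" and g :: "'a list \<Rightarrow> 'b::topological_space"
  shows "(\<lambda>w. g (stake t w)) \<in> borel_measurable (stream_space (measure_pmf D))"
  by (rule measurable_compose[OF measurable_stake_measure_pmf borel_measurable_count_space])

lemma nn_integral_stream_foldl_le:
  fixes D :: "'a::countable pmf" and f :: "'s \<Rightarrow> 'a \<Rightarrow> 's" and V :: "'s \<Rightarrow> ennreal"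
  assumes drift: "\<And>s. (\<integral>\<^sup>+x. V (f s x) \<partial>measure_pmf D) \<le> \<rho> * V s"
  shows "(\<integral>\<^sup>+w. V (foldl f s (stake t w)) \<partial>stream_space (measure_pmf D)) \<le> \<rho> ^ t * V s"
proof (induction t arbitrary: s)
  case 0
  interpret prob_space "stream_space (measure_pmf D)"
    by (rule prob_space.prob_space_stream_space[OF prob_space_measure_pmf])
  show ?case by (simp add: emeasure_space_1)
next
  case (Suc t)
  let ?S = "stream_space (measure_pmf D)"
  have "(\<integral>\<^sup>+w. V (foldl f s (stake (Suc t) w)) \<partial>?S)
      = (\<integral>\<^sup>+x. (\<integral>\<^sup>+w. V (foldl f (f s x) (stake t w)) \<partial>?S) \<partial>measure_pmf D)"
    by (subst prob_space.nn_integral_stream_space[OF prob_space_measure_pmf])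
       (simp_all add: borel_measurable_stake_measure_pmf)
  also have "\<dots> \<le> (\<integral>\<^sup>+x. \<rho> ^ t * V (f s x) \<partial>measure_pmf D)"
    by (intro nn_integral_mono Suc.IH)
  also have "\<dots> = \<rho> ^ t * (\<integral>\<^sup>+x. V (f s x) \<partial>measure_pmf D)"
    by (rule nn_integral_cmult) simp
  also have "\<dots> \<le> \<rho> ^ t * (\<rho> * V s)"
    by (intro mult_left_mono drift) simp
  finally show ?case
    by (simp add: ac_simps)
qed

definition exp_potential :: "nat \<Rightarrow> real \<Rightarrow> (nat \<Rightarrow> real) \<Rightarrow> real" where
  "exp_potential n \<theta> Tv = (\<Sum>i<n. exp (\<theta> * Tv i))"

lemma exp_potential_nonneg: "exp_potential n \<theta> Tv \<ge> 0"
  unfolding exp_potential_def by (simp add: sum_nonneg)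

lemma exp_potential_const_0: "exp_potential n \<theta> (\<lambda>_. 0) = real n"
  by (simp add: exp_potential_def)

lemma exp_potential_fun_upd:
  assumes "k < n"
  shows "exp_potential n \<theta> (Tv(k := v)) = exp_potential n \<theta> Tv - exp (\<theta> * Tv k) + exp (\<theta> * v)"
proof -
  have "exp_potential n \<theta> (Tv(k := v))
      = (\<Sum>i<n. exp (\<theta> * Tv i) + (if i = k then exp (\<theta> * v) - exp (\<theta> * Tv k) else 0))"
    unfolding exp_potential_def by (rule sum.cong) auto
  then show ?thesis
    using assms by (simp add: sum.distrib exp_potential_def)
qed

lemma exp_potential_step_Comp:
  assumes "k < n"
  shows "exp_potential n \<theta> (step \<tau> (Comp k) Tv) = exp_potential n \<theta> Tv + (exp \<theta> - 1) * exp (\<theta> * Tv k)"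
  using exp_potential_fun_upd[OF assms] by (simp add: exp_add algebra_simps)

lemma exp_potential_step_Comm_le:
  assumes "k < n" "l < n" "k \<noteq> l"
  shows "exp_potential n \<theta> (step \<tau> (Comm k l) Tv)
    \<le> exp_potential n \<theta> Tv + (2 * exp (\<theta> * \<tau>) - 1) * (exp (\<theta> * Tv k) + exp (\<theta> * Tv l))"
proof -
  define m where "m = max (Tv k) (Tv l) + \<tau>"
  have "exp_potential n \<theta> (step \<tau> (Comm k l) Tv)
      = exp_potential n \<theta> Tv - exp (\<theta> * Tv k) - exp (\<theta> * Tv l) + 2 * exp (\<theta> * m)"
    using exp_potential_fun_upd[OF assms(2), of \<theta> "Tv(k := m)" m]
      exp_potential_fun_upd[OF assms(1), of \<theta> Tv m] assms(3)
    by (simp add: m_def Let_def)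
  also have "exp (\<theta> * m) = exp (\<theta> * \<tau>) * exp (\<theta> * max (Tv k) (Tv l))"
    by (simp add: m_def distrib_left exp_add)
  also have "exp (\<theta> * max (Tv k) (Tv l)) \<le> exp (\<theta> * Tv k) + exp (\<theta> * Tv l)"
    by (cases "Tv k \<le> Tv l") (auto simp: max_def)
  finally show ?thesis
    by (simp add: algebra_simps)
qed

lemma exp_Max_le_exp_potential:
  assumes "n > 0" "\<theta> \<ge> 0"
  shows "exp (\<theta> * (MAX i\<in>{..<n}. Tv i)) \<le> exp_potential n \<theta> Tv"
proof -
  have "(MAX i\<in>{..<n}. Tv i) \<in> Tv ` {..<n}"
    using assms(1) by (intro Max_in) auto
  then obtain i where "i < n" "(MAX i\<in>{..<n}. Tv i) = Tv i"
    by auto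
  then show ?thesis
    unfolding exp_potential_def by (metis finite_lessThan exp_ge_zero lessThan_iff member_le_sum)
qed

lemma event_support_eq:
  "{Comp k | k. k < n} \<union> {Comm k l | k l. (k, l) \<in> E} = Comp ` {..<n} \<union> case_prod Comm ` E"
  by force

lemma finite_edges:
  fixes n :: nat
  assumes "E \<subseteq> {(k, l). k < l \<and> l < n}"
  shows "finite E"
proof (rule finite_subset)
  show "E \<subseteq> {..<n} \<times> {..<n}"
    using assms by auto
qed simp

lemma finite_set_pmf_events:
  assumes edges: "E \<subseteq> {(k, l). k < l \<and> l < n}"
    and support: "set_pmf D \<subseteq> {Comp k | k. k < n} \<union> {Comm k l | k l. (k, l) \<in> E}"
  shows "finite (set_pmf D)"
  using support finite_edges[OF edges] by (auto simp: event_support_eq intro: finite_subset)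

lemma sum_set_pmf_events:
  fixes f :: "event \<Rightarrow> real"
  assumes edges: "E \<subseteq> {(k, l). k < l \<and> l < n}"
    and support: "set_pmf D \<subseteq> {Comp k | k. k < n} \<union> {Comm k l | k l. (k, l) \<in> E}"
  shows "(\<Sum>e\<in>set_pmf D. pmf D e * f e)
    = (\<Sum>k<n. pmf D (Comp k) * f (Comp k)) + (\<Sum>(k, l)\<in>E. pmf D (Comm k l) * f (Comm k l))"
proof -
  have fin: "finite E"
    using finite_edges[OF edges] .
  have "(\<Sum>e\<in>set_pmf D. pmf D e * f e) = (\<Sum>e\<in>Comp ` {..<n} \<union> case_prod Comm ` E. pmf D e * f e)"
    using support fin by (intro sum.mono_neutral_left) (auto simp: event_support_eq set_pmf_iff)
  also have "\<dots> = (\<Sum>e\<in>Comp ` {..<n}. pmf D e * f e) + (\<Sum>e\<in>case_prod Comm ` E. pmf D e * f e)"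
    using fin by (intro sum.union_disjoint) auto
  also have "\<dots> = (\<Sum>k<n. pmf D (Comp k) * f (Comp k)) + (\<Sum>(k, l)\<in>E. pmf D (Comm k l) * f (Comm k l))"
    by (simp add: sum.reindex inj_on_def prod_eq_iff case_prod_beta)
  finally show ?thesis .
qed

lemma sum_square_if_mem:
  fixes n :: nat
  assumes "E \<subseteq> {..<n} \<times> {..<n}"
  shows "(\<Sum>i<n. \<Sum>l<n. if (i, l) \<in> E then g i l else 0) = (\<Sum>(i, l)\<in>E. g i l)"
proof -
  have "(\<Sum>i<n. \<Sum>l<n. if (i, l) \<in> E then g i l else 0)
      = (\<Sum>e\<in>{..<n} \<times> {..<n}. if e \<in> E then case_prod g e else 0)"
    by (simp add: sum.cartesian_product split_def cong: if_cong)
  also have "\<dots> = (\<Sum>e\<in>{..<n} \<times> {..<n} \<inter> E. case_prod g e)"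
    by (rule sum.inter_restrict[symmetric]) simp
  also have "{..<n} \<times> {..<n} \<inter> E = E"
    using assms by blast
  finally show ?thesis .
qed

lemma sum_edges_endpoints:
  assumes edges: "E \<subseteq> {(k, l). k < l \<and> l < n}"
  shows "(\<Sum>(k, l)\<in>E. pmf D (Comm k l) * (x k + x l)) = (\<Sum>i<n. x i * (\<Sum>l<n. edge_prob D E i l))"
proof -
  have square: "E \<subseteq> {..<n} \<times> {..<n}"
    using edges by auto
  have lt: "a < b" if "(a, b) \<in> E" for a b
    using edges that by auto
  have "\<not> ((i, l) \<in> E \<and> (l, i) \<in> E)" for i l
    using lt[of i l] lt[of l i] by auto
  then have "edge_prob D E i l = (if (i, l) \<in> E then pmf D (Comm i l) else 0)
      + (if (l, i) \<in> E then pmf D (Comm l i) else 0)" for i l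
    by (auto simp: edge_prob_def)
  then have "x i * (\<Sum>l<n. edge_prob D E i l)
      = (\<Sum>l<n. if (i, l) \<in> E then pmf D (Comm i l) * x i else 0)
      + (\<Sum>l<n. if (l, i) \<in> E then pmf D (Comm l i) * x i else 0)" for i
    by (simp add: sum_distrib_left sum.distrib[symmetric] algebra_simps) (auto intro!: sum.cong)
  then have "(\<Sum>i<n. x i * (\<Sum>l<n. edge_prob D E i l))
      = (\<Sum>i<n. \<Sum>l<n. if (i, l) \<in> E then pmf D (Comm i l) * x i else 0)
      + (\<Sum>i<n. \<Sum>l<n. if (l, i) \<in> E then pmf D (Comm l i) * x i else 0)"
    by (simp add: sum.distrib)
  also have "(\<Sum>i<n. \<Sum>l<n. if (l, i) \<in> E then pmf D (Comm l i) * x i else 0)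
      = (\<Sum>l<n. \<Sum>i<n. if (l, i) \<in> E then pmf D (Comm l i) * x i else 0)"
    by (rule sum.swap)
  finally show ?thesis
    by (simp add: sum_square_if_mem[OF square] sum.distrib[symmetric] split_def algebra_simps)
qed

lemma sum_edge_prob_le_p_comm_max:
  assumes "k < n"
  shows "(\<Sum>l<n. edge_prob D E k l) \<le> 2 * p_comm_max n D E / real n"
proof -
  have "(\<Sum>l<n. edge_prob D E k l) \<le> (MAX k\<in>{..<n}. \<Sum>l<n. edge_prob D E k l)"
    using assms by (intro Max_ge) auto
  then show ?thesis
    using assms by (simp add: p_comm_max_def)
qed

lemma p_comm_max_nonneg: "p_comm_max n D E \<ge> 0"
proof (cases "n = 0")
  case False
  have "0 \<le> (\<Sum>l<n. edge_prob D E 0 l)"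
    by (intro sum_nonneg) (simp add: edge_prob_def)
  also have "\<dots> \<le> 2 * p_comm_max n D E / real n"
    using False by (intro sum_edge_prob_le_p_comm_max) simp
  finally show ?thesis
    using False by (simp add: zero_le_divide_iff)
qed (simp add: p_comm_max_def)

lemma p_comm_le_p_comm_max:
  assumes edges: "E \<subseteq> {(k, l). k < l \<and> l < n}"
  shows "p_comm D E \<le> p_comm_max n D E"
proof -
  have "2 * p_comm D E = (\<Sum>(k, l)\<in>E. pmf D (Comm k l) * (1 + 1))"
    by (simp add: p_comm_def split_def sum_distrib_left mult.commute)
  also have "\<dots> = (\<Sum>i<n. \<Sum>l<n. edge_prob D E i l)"
    using sum_edges_endpoints[OF edges, of D "\<lambda>_. 1"] by simp
  also have "\<dots> \<le> (\<Sum>i<n. 2 * p_comm_max n D E / real n)"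
    by (intro sum_mono sum_edge_prob_le_p_comm_max) simp
  also have "\<dots> \<le> 2 * p_comm_max n D E"
    using p_comm_max_nonneg[of n D E] by (cases "n = 0") simp_all
  finally show ?thesis
    by simp
qed

lemma one_le_p_comp_add_p_comm_max:
  assumes "E \<subseteq> {(k, l). k < l \<and> l < n}"
  shows "1 \<le> p_comp D E + p_comm_max n D E"
  using p_comm_le_p_comm_max[OF assms, of D] by (simp add: p_comp_def)

lemma p_comp_nonneg:
  assumes "n > 0" and uniform_comp: "\<forall>k<n. pmf D (Comp k) = p_comp D E / real n"
  shows "p_comp D E \<ge> 0"
  using uniform_comp[rule_format, OF assms(1)] assms(1) pmf_nonneg[of D "Comp 0"]
  by (simp add: zero_le_divide_iff)

lemma exp_potential_drift:
  assumes n_pos: "n > 0"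
    and edges: "E \<subseteq> {(k, l). k < l \<and> l < n}"
    and support: "set_pmf D \<subseteq> {Comp k | k. k < n} \<union> {Comm k l | k l. (k, l) \<in> E}"
    and uniform_comp: "\<forall>k<n. pmf D (Comp k) = p_comp D E / real n"
    and "\<theta> \<ge> 0" "\<tau> \<ge> 0"
  shows "(\<Sum>e\<in>set_pmf D. pmf D e * exp_potential n \<theta> (step \<tau> e Tv))
    \<le> (1 + p_comp D E / real n * (exp \<theta> - 1)
         + (2 * exp (\<theta> * \<tau>) - 1) * (2 * p_comm_max n D E / real n)) * exp_potential n \<theta> Tv"
proof -
  define \<Phi> where "\<Phi> = exp_potential n \<theta> Tv"
  define x where "x i = exp (\<theta> * Tv i)" for i
  define c where "c = 2 * exp (\<theta> * \<tau>) - 1"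
  define \<beta> where "\<beta> = 2 * p_comm_max n D E / real n"
  have "1 \<le> exp (\<theta> * \<tau>)"
    using assms(5,6) by simp
  then have c_nonneg: "c \<ge> 0"
    unfolding c_def by linarith
  have "(\<Sum>k<n. pmf D (Comp k) * exp_potential n \<theta> (step \<tau> (Comp k) Tv))
      = (\<Sum>k<n. p_comp D E / real n * (\<Phi> + (exp \<theta> - 1) * x k))"
    by (intro sum.cong) (simp_all add: uniform_comp exp_potential_step_Comp \<Phi>_def x_def del: step.simps)
  also have "\<dots> = real n * (p_comp D E / real n) * \<Phi> + p_comp D E / real n * (exp \<theta> - 1) * (\<Sum>k<n. x k)"
    by (simp add: distrib_left sum.distrib sum_distrib_left[symmetric] sum_divide_distrib[symmetric] mult.assoc)
  finally have comp: "(\<Sum>k<n. pmf D (Comp k) * exp_potential n \<theta> (step \<tau> (Comp k) Tv))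
      = p_comp D E * \<Phi> + p_comp D E / real n * (exp \<theta> - 1) * \<Phi>"
    using n_pos by (simp add: \<Phi>_def exp_potential_def x_def)
  have comm_pointwise: "pmf D (Comm k l) * exp_potential n \<theta> (step \<tau> (Comm k l) Tv)
      \<le> pmf D (Comm k l) * \<Phi> + c * (pmf D (Comm k l) * (x k + x l))" if "(k, l) \<in> E" for k l
  proof -
    have "k < n" "l < n" "k \<noteq> l"
      using edges that by auto
    then have "exp_potential n \<theta> (step \<tau> (Comm k l) Tv) \<le> \<Phi> + c * (x k + x l)"
      unfolding \<Phi>_def c_def x_def by (rule exp_potential_step_Comm_le)
    from mult_left_mono[OF this pmf_nonneg] show ?thesis
      by (simp add: algebra_simps)
  qed
  have "(\<Sum>(k, l)\<in>E. pmf D (Comm k l) * exp_potential n \<theta> (step \<tau> (Comm k l) Tv))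
      \<le> (\<Sum>(k, l)\<in>E. pmf D (Comm k l) * \<Phi> + c * (pmf D (Comm k l) * (x k + x l)))"
    using comm_pointwise by (intro sum_mono) auto
  also have "\<dots> = p_comm D E * \<Phi> + c * (\<Sum>(k, l)\<in>E. pmf D (Comm k l) * (x k + x l))"
    by (simp add: p_comm_def split_def sum.distrib sum_distrib_left sum_distrib_right)
  also have "(\<Sum>(k, l)\<in>E. pmf D (Comm k l) * (x k + x l)) = (\<Sum>i<n. x i * (\<Sum>l<n. edge_prob D E i l))"
    by (rule sum_edges_endpoints[OF edges])
  also have "\<dots> \<le> (\<Sum>i<n. x i * \<beta>)"
    by (intro sum_mono mult_left_mono) (auto simp: x_def \<beta>_def sum_edge_prob_le_p_comm_max)
  also have "\<dots> = \<beta> * \<Phi>"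
    by (simp add: \<Phi>_def exp_potential_def x_def sum_distrib_left mult.commute)
  finally have comm: "(\<Sum>(k, l)\<in>E. pmf D (Comm k l) * exp_potential n \<theta> (step \<tau> (Comm k l) Tv))
      \<le> p_comm D E * \<Phi> + c * (\<beta> * \<Phi>)"
    using c_nonneg by (simp add: mult_left_mono)
  show ?thesis
    using comp comm unfolding sum_set_pmf_events[OF edges support]
    by (simp add: \<Phi>_def c_def \<beta>_def p_comp_def algebra_simps)
qed

lemma measurable_total_time [measurable]:
  "(\<lambda>w. total_time n \<tau> w t) \<in> borel_measurable (stream_space (measure_pmf D))"
  unfolding total_time_def clocks_def by (rule borel_measurable_stake_measure_pmf)

lemma total_time_tail_le:
  fixes D :: "event pmf"
  defines "M \<equiv> stream_space (measure_pmf D)"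
  assumes n_pos: "n > 0" and "\<theta> > 0" "\<rho> \<ge> 0" and fin: "finite (set_pmf D)"
    and drift: "\<And>Tv. (\<Sum>e\<in>set_pmf D. pmf D e * exp_potential n \<theta> (step \<tau> e Tv)) \<le> \<rho> * exp_potential n \<theta> Tv"
  shows "measure M {w \<in> space M. a \<le> total_time n \<tau> w t} \<le> real n * \<rho> ^ t / exp (\<theta> * a)"
proof -
  interpret prob_space M
    unfolding M_def by (rule prob_space.prob_space_stream_space[OF prob_space_measure_pmf])
  let ?V = "\<lambda>Tv. ennreal (exp_potential n \<theta> Tv)"
  have drift_nn: "(\<integral>\<^sup>+e. ?V (step \<tau> e Tv) \<partial>measure_pmf D) \<le> ennreal \<rho> * ?V Tv" for Tv
  proof -
    have "(\<integral>\<^sup>+e. ?V (step \<tau> e Tv) \<partial>measure_pmf D)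
        = ennreal (\<Sum>e\<in>set_pmf D. pmf D e * exp_potential n \<theta> (step \<tau> e Tv))"
      using fin by (simp add: nn_integral_measure_pmf_finite sum_ennreal[symmetric] exp_potential_nonneg
          ennreal_mult'' mult.commute)
    also have "\<dots> \<le> ennreal (\<rho> * exp_potential n \<theta> Tv)"
      by (rule ennreal_leI) (rule drift)
    also have "\<dots> = ennreal \<rho> * ?V Tv"
      by (simp add: ennreal_mult'' exp_potential_nonneg)
    finally show ?thesis .
  qed
  have "emeasure M {w \<in> space M. a \<le> total_time n \<tau> w t}
      \<le> ennreal (exp (- \<theta> * a)) * (\<integral>\<^sup>+w. ennreal (exp (\<theta> * total_time n \<tau> w t)) * indicator (space M) w \<partial>M)"
    using \<open>\<theta> > 0\<close> by (intro Chernoff_ineq_nn_integral_ge) (simp_all add: M_def)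
  also have "\<dots> \<le> ennreal (exp (- \<theta> * a))
      * (\<integral>\<^sup>+w. ?V (foldl (\<lambda>Tv e. step \<tau> e Tv) (\<lambda>_. 0) (stake t w)) \<partial>M)"
    using n_pos \<open>\<theta> > 0\<close>
    by (intro mult_left_mono nn_integral_mono) (auto simp: total_time_def clocks_def
        intro!: ennreal_leI exp_Max_le_exp_potential split: split_indicator)
  also have "\<dots> \<le> ennreal (exp (- \<theta> * a)) * (ennreal \<rho> ^ t * ?V (\<lambda>_. 0))"
    unfolding M_def by (intro mult_left_mono nn_integral_stream_foldl_le[where V = ?V] drift_nn) simp
  finally have "ennreal (measure M {w \<in> space M. a \<le> total_time n \<tau> w t})
      \<le> ennreal (exp (- \<theta> * a) * (\<rho> ^ t * real n))"
    using \<open>\<rho> \<ge> 0\<close> by (simp add: emeasure_eq_measure exp_potential_const_0 ennreal_power ennreal_mult'')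
  then have "measure M {w \<in> space M. a \<le> total_time n \<tau> w t} \<le> exp (- \<theta> * a) * (\<rho> ^ t * real n)"
    using \<open>\<rho> \<ge> 0\<close> by (subst (asm) ennreal_le_iff) simp_all
  then show ?thesis
    by (simp add: exp_minus field_simps)
qed

lemma prob_total_time_le_tendsto_1:
  fixes D :: "event pmf"
  defines "M \<equiv> stream_space (measure_pmf D)"
  assumes n_pos: "n > 0" and "\<theta> > 0" and fin: "finite (set_pmf D)"
    and drift: "\<And>Tv. (\<Sum>e\<in>set_pmf D. pmf D e * exp_potential n \<theta> (step \<tau> e Tv)) \<le> \<rho> * exp_potential n \<theta> Tv"
    and rate: "\<rho> < exp (\<theta> * x)"
  shows "(\<lambda>t. measure M {w \<in> space M. total_time n \<tau> w t / real t \<le> x}) \<longlonglongrightarrow> 1"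
proof -
  interpret prob_space M
    unfolding M_def by (rule prob_space.prob_space_stream_space[OF prob_space_measure_pmf])
  have [measurable]: "(\<lambda>w. total_time n \<tau> w t) \<in> borel_measurable M" for t
    unfolding M_def by (rule measurable_total_time)
  have "0 \<le> (\<Sum>e\<in>set_pmf D. pmf D e * exp_potential n \<theta> (step \<tau> e (\<lambda>_. 0)))"
    by (intro sum_nonneg mult_nonneg_nonneg pmf_nonneg exp_potential_nonneg)
  also have "\<dots> \<le> \<rho> * real n"
    using drift[of "\<lambda>_. 0"] by (simp add: exp_potential_const_0)
  finally have "\<rho> \<ge> 0"
    using n_pos by (simp add: zero_le_mult_iff)
  define r where "r = \<rho> / exp (\<theta> * x)"
  have r: "0 \<le> r" "r < 1"
    using \<open>\<rho> \<ge> 0\<close> rate by (auto simp: r_def)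
  have bound: "1 - real n * r ^ t \<le> measure M {w \<in> space M. total_time n \<tau> w t / real t \<le> x}"
    if "t > 0" for t
  proof -
    let ?A = "{w \<in> space M. total_time n \<tau> w t / real t \<le> x}"
    have "space M - ?A \<subseteq> {w \<in> space M. x * real t \<le> total_time n \<tau> w t}"
      using that by (auto simp: not_le pos_less_divide_eq)
    then have "measure M (space M - ?A) \<le> measure M {w \<in> space M. x * real t \<le> total_time n \<tau> w t}"
      by (rule finite_measure_mono) measurable
    also have "\<dots> \<le> real n * \<rho> ^ t / exp (\<theta> * (x * real t))"
      unfolding M_def using n_pos \<open>\<theta> > 0\<close> \<open>\<rho> \<ge> 0\<close> fin drift by (rule total_time_tail_le)
    also have "\<dots> = real n * r ^ t"
      by (simp add: r_def power_divide exp_of_nat_mult[symmetric] ac_simps)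
    moreover have "measure M (space M - ?A) = 1 - measure M ?A"
      by (intro prob_compl) measurable
    ultimately show ?thesis
      by simp
  qed
  have "(\<lambda>t. 1 - real n * r ^ t) \<longlonglongrightarrow> 1 - real n * 0"
    using r by (intro tendsto_intros) auto
  then have lim: "(\<lambda>t. 1 - real n * r ^ t) \<longlonglongrightarrow> 1"
    by simp
  have lower: "\<forall>\<^sub>F t in sequentially. 1 - real n * r ^ t \<le> measure M {w \<in> space M. total_time n \<tau> w t / real t \<le> x}"
    using eventually_gt_at_top[of 0] by eventually_elim (rule bound)
  show ?thesis
    by (rule tendsto_sandwich[OF lower _ lim tendsto_const]) simp
qed

lemma drift_factor_lt_exp:
  fixes a b \<tau> :: real
  assumes "a \<ge> 0" "b \<ge> 0" "a + b > 0" "\<tau> > 0" "\<tau> > 1 \<or> b < 2 * a"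
  defines "\<theta> \<equiv> if \<tau> > 1 then 1 / \<tau> else 1"
  shows "1 + a * (exp \<theta> - 1) + (2 * exp (\<theta> * \<tau>) - 1) * b < exp (\<theta> * (23 * (a + \<tau> * b)))"
proof -
  have "0 < \<theta>" "\<theta> \<le> 1" "\<theta> * \<tau> \<le> 1"
    using \<open>\<tau> > 0\<close> by (simp_all add: \<theta>_def)
  then have "exp \<theta> - 1 \<le> \<theta> + \<theta> * \<theta>" "\<theta> * \<theta> \<le> \<theta>"
    using exp_bound[of \<theta>] mult_left_le[of \<theta> \<theta>] by (simp_all add: power2_eq_square)
  then have "exp \<theta> - 1 \<le> 2 * \<theta>"
    by linarith
  then have comp: "a * (exp \<theta> - 1) \<le> 2 * (\<theta> * a)"
    using \<open>a \<ge> 0\<close> mult_left_mono[of "exp \<theta> - 1" "2 * \<theta>" a] by (simp add: ac_simps)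
  have "exp (\<theta> * \<tau>) \<le> 3"
    using \<open>\<theta> * \<tau> \<le> 1\<close> exp_le order.trans[of "exp (\<theta> * \<tau>)" "exp 1" 3] by simp
  then have comm: "(2 * exp (\<theta> * \<tau>) - 1) * b \<le> 5 * b"
    using \<open>b \<ge> 0\<close> mult_right_mono[of "2 * exp (\<theta> * \<tau>) - 1" 5 b] by simp
  have "a * (exp \<theta> - 1) + (2 * exp (\<theta> * \<tau>) - 1) * b < \<theta> * (23 * (a + \<tau> * b))"
  proof (cases "\<tau> > 1")
    case True
    then have "\<theta> * \<tau> = 1"
      by (simp add: \<theta>_def)
    then have rhs: "\<theta> * (23 * (a + \<tau> * b)) = 23 * (\<theta> * a) + 23 * b"
      by (simp add: algebra_simps)
    have "\<theta> * a \<ge> 0" "\<theta> * a > 0 \<or> b > 0"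
      using assms(1-3) \<open>\<theta> > 0\<close> by auto
    then show ?thesis
      unfolding rhs using comp comm \<open>b \<ge> 0\<close> by linarith
  next
    case False
    then have "\<theta> = 1" "b < 2 * a"
      using assms(5) by (simp_all add: \<theta>_def)
    have "0 \<le> \<tau> * b"
      using \<open>\<tau> > 0\<close> \<open>b \<ge> 0\<close> by simp
    then have "2 * (\<theta> * a) + 5 * b < \<theta> * (23 * (a + \<tau> * b))"
      using \<open>b < 2 * a\<close> \<open>a \<ge> 0\<close> unfolding \<open>\<theta> = 1\<close> by (simp add: algebra_simps)
    then show ?thesis
      using comp comm by linarith
  qed
  then show ?thesis
    using exp_ge_add_one_self[of "\<theta> * (23 * (a + \<tau> * b))"] by linarith
qed

theorem theorem2:
  fixes n :: nat and E :: "(nat \<times> nat) set" and D :: "event pmf" and \<tau> :: real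
  assumes n_pos: "n > 0"
    and edges: "E \<subseteq> {(k, l). k < l \<and> l < n}"
    and support: "set_pmf D \<subseteq> {Comp k | k. k < n} \<union> {Comm k l | k l. (k, l) \<in> E}"
    and tau_pos: "\<tau> > 0"
    and uniform_comp: "\<forall>k<n. pmf D (Comp k) = p_comp D E / real n"
    and cond: "p_comp D E > p_comm_max n D E \<or> \<tau> > 1"
  shows "\<exists>C < 24.
     (\<lambda>t. measure (stream_space (measure_pmf D))
            {w \<in> space (stream_space (measure_pmf D)).
               total_time n \<tau> w t / real t
                 \<le> C / real n * (p_comp D E + 2 * \<tau> * p_comm_max n D E)})
     \<longlonglongrightarrow> 1"
proof -
  define a where "a = p_comp D E / real n"
  define b where "b = 2 * p_comm_max n D E / real n"
  define \<theta> where "\<theta> = (if \<tau> > 1 then 1 / \<tau> else 1)"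
  have "a \<ge> 0" "b \<ge> 0"
    using p_comp_nonneg[OF n_pos uniform_comp] p_comm_max_nonneg[of n D E] by (simp_all add: a_def b_def)
  moreover have "a + b > 0"
    using one_le_p_comp_add_p_comm_max[OF edges, of D] p_comm_max_nonneg[of n D E] n_pos
    by (simp add: a_def b_def add_divide_distrib[symmetric])
  moreover have "\<tau> > 1 \<or> b < 2 * a"
    using cond n_pos by (auto simp: a_def b_def divide_strict_right_mono)
  ultimately have rate: "1 + a * (exp \<theta> - 1) + (2 * exp (\<theta> * \<tau>) - 1) * b < exp (\<theta> * (23 * (a + \<tau> * b)))"
    unfolding \<theta>_def using tau_pos by (intro drift_factor_lt_exp)
  have "\<theta> > 0"
    using tau_pos by (simp add: \<theta>_def)
  have drift: "(\<Sum>e\<in>set_pmf D. pmf D e * exp_potential n \<theta> (step \<tau> e Tv))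
      \<le> (1 + a * (exp \<theta> - 1) + (2 * exp (\<theta> * \<tau>) - 1) * b) * exp_potential n \<theta> Tv" for Tv
    unfolding a_def b_def using \<open>\<theta> > 0\<close> tau_pos
    by (intro exp_potential_drift[OF n_pos edges support uniform_comp]) simp_all
  have "23 / real n * (p_comp D E + 2 * \<tau> * p_comm_max n D E) = 23 * (a + \<tau> * b)"
    by (simp add: a_def b_def field_simps add_divide_distrib)
  then show ?thesis
    using prob_total_time_le_tendsto_1[OF n_pos \<open>\<theta> > 0\<close> finite_set_pmf_events[OF edges support] drift rate]
    by (intro exI[of _ 23]) simp
qed

end
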